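(* For any $n\in\mathbb{N}$ there exists $x\in I$ such that $n\,\tilde{\mid}\,x$.
   Context: $\mathbb{N}=\{1,2,3,\dots\}$; $\beta\mathbb{N}$ is the set of ultrafilters on $\mathbb{N}$, with each $n\in\mathbb{N}$ identified with the principal ultrafilter at $n$. For $A\subseteq\mathbb{N}$, $\overline{A}=\{x\in\beta\mathbb{N}:A\in x\}$. $P$ is the set of primes, $L_0=\{1\}$, $L_k=\{a_1\cdots a_k:a_i\in P\}$. $I=\bigcap_{i=0}^\infty\overline{\mathbb{N}\setminus L_i}$ (ultrafilters containing none of the $L_i$). For $x,y\in\beta\mathbb{N}$, $x\,\tilde{\mid}\,y$ iff for every $A\in x$ the set $\{k\in\mathbb{N}:\exists a\in A,\ a\mid k\}$ belongs to $y$. *)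

theory Defs
  imports "HOL-Computational_Algebra.Primes"
begin

text \<open>The paper's N = {1,2,3,...}, modelled inside type nat.\<close>
definition Npos :: "nat set" where "Npos = {n. n \<ge> 1}"

definition ultrafilter_N :: "nat set set \<Rightarrow> bool" where
  "ultrafilter_N x \<longleftrightarrow>
     (\<forall>A\<in>x. A \<subseteq> Npos) \<and> Npos \<in> x \<and> {} \<notin> x \<and>
     (\<forall>A\<in>x. \<forall>B\<in>x. A \<inter> B \<in> x) \<and>
     (\<forall>A\<in>x. \<forall>B. A \<subseteq> B \<and> B \<subseteq> Npos \<longrightarrow> B \<in> x) \<and>
     (\<forall>A. A \<subseteq> Npos \<longrightarrow> A \<in> x \<or> Npos - A \<in> x)"

definition betaN :: "nat set set set" where
  "betaN = {x. ultrafilter_N x}"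

text \<open>Principal ultrafilter at n (identification of n with an element of beta N).\<close>
definition principal :: "nat \<Rightarrow> nat set set" where
  "principal n = {A. A \<subseteq> Npos \<and> n \<in> A}"

definition cl :: "nat set \<Rightarrow> nat set set set" where
  "cl A = {x \<in> betaN. A \<in> x}"

definition L :: "nat \<Rightarrow> nat set" where
  "L k = {prod_list ps | ps. length ps = k \<and> (\<forall>p\<in>set ps. prime p)}"

definition Ifam :: "nat set set set" where
  "Ifam = (\<Inter>i. cl (Npos - L i))"

definition udvd :: "nat set set \<Rightarrow> nat set set \<Rightarrow> bool" where
  "udvd x y \<longleftrightarrow> (\<forall>A\<in>x. {k \<in> Npos. \<exists>a\<in>A. a dvd k} \<in> y)"

end

theory Submission
  imports Defs
begin

text \<open>The multiples of \<open>n\<close> with more than \<open>m\<close> prime factors (counted with multiplicity)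
  form a decreasing sequence of nonempty sets, as \<open>n * 2 ^ (m + 1)\<close> witnesses. By Zorn's lemma
  some ultrafilter contains all of them; it avoids every \<open>L i\<close>, so it lies in \<open>I\<close>, and it
  contains every set of multiples of \<open>n\<close>, which gives \<open>n \<tilde>| x\<close>.\<close>

definition proper_filter_N :: "nat set set \<Rightarrow> bool" where
  "proper_filter_N F \<longleftrightarrow> (\<forall>A\<in>F. A \<subseteq> Npos) \<and> Npos \<in> F \<and> {} \<notin> F \<and>
     (\<forall>A\<in>F. \<forall>B\<in>F. A \<inter> B \<in> F) \<and>
     (\<forall>A\<in>F. \<forall>B. A \<subseteq> B \<and> B \<subseteq> Npos \<longrightarrow> B \<in> F)"

lemma proper_filter_NI:
  assumes "\<And>A. A \<in> F \<Longrightarrow> A \<subseteq> Npos" and "Npos \<in> F" and "{} \<notin> F"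
    and "\<And>A B. A \<in> F \<Longrightarrow> B \<in> F \<Longrightarrow> A \<inter> B \<in> F"
    and "\<And>A B. A \<in> F \<Longrightarrow> A \<subseteq> B \<Longrightarrow> B \<subseteq> Npos \<Longrightarrow> B \<in> F"
  shows "proper_filter_N F"
  using assms unfolding proper_filter_N_def by blast

lemma
  assumes "proper_filter_N F"
  shows proper_filter_N_subset: "A \<in> F \<Longrightarrow> A \<subseteq> Npos"
    and proper_filter_N_top: "Npos \<in> F"
    and proper_filter_N_empty_notin: "{} \<notin> F"
    and proper_filter_N_Int: "A \<in> F \<Longrightarrow> B \<in> F \<Longrightarrow> A \<inter> B \<in> F"
    and proper_filter_N_upward: "A \<in> F \<Longrightarrow> A \<subseteq> B \<Longrightarrow> B \<subseteq> Npos \<Longrightarrow> B \<in> F"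
  using assms unfolding proper_filter_N_def by blast+

lemma proper_filter_N_Union_chain:
  assumes "C \<noteq> {}" and "subset.chain {F. proper_filter_N F} C"
  shows "proper_filter_N (\<Union>C)"
proof -
  have filters: "\<And>F. F \<in> C \<Longrightarrow> proper_filter_N F"
    and comparable: "\<And>F G. F \<in> C \<Longrightarrow> G \<in> C \<Longrightarrow> F \<subseteq> G \<or> G \<subseteq> F"
    using assms(2) unfolding subset.chain_def by auto
  show ?thesis
  proof (rule proper_filter_NI)
    fix X Y assume "X \<in> \<Union>C" "Y \<in> \<Union>C"
    then obtain F G where "F \<in> C" "G \<in> C" "X \<in> F" "Y \<in> G" by auto
    with comparable[of F G] obtain H where "H \<in> C" "X \<in> H" "Y \<in> H" by blast
    then show "X \<inter> Y \<in> \<Union>C" using filters proper_filter_N_Int by blast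
  next
    from assms(1) obtain F where "F \<in> C" by blast
    then show "Npos \<in> \<Union>C" using filters proper_filter_N_top by blast
  next
    fix X Y assume "X \<in> \<Union>C" "X \<subseteq> Y" "Y \<subseteq> Npos"
    then show "Y \<in> \<Union>C" using filters proper_filter_N_upward by blast
  qed (use filters proper_filter_N_subset proper_filter_N_empty_notin in blast)+
qed

lemma ultrafilter_N_iff_proper_filter_N:
  "ultrafilter_N U \<longleftrightarrow> proper_filter_N U \<and> (\<forall>A. A \<subseteq> Npos \<longrightarrow> A \<in> U \<or> Npos - A \<in> U)"
  unfolding ultrafilter_N_def proper_filter_N_def by (simp only: conj_assoc)

lemma maximal_proper_filter_N_is_ultrafilter:
  assumes U: "proper_filter_N U"
    and maximal: "\<And>F. proper_filter_N F \<Longrightarrow> U \<subseteq> F \<Longrightarrow> F = U"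
  shows "ultrafilter_N U"
proof -
  have "A \<in> U \<or> Npos - A \<in> U" if A: "A \<subseteq> Npos" for A
  proof (cases "\<exists>X\<in>U. A \<inter> X = {}")
    case True
    then obtain X where "X \<in> U" "A \<inter> X = {}" by blast
    with proper_filter_N_subset[OF U] have "X \<subseteq> Npos - A" by blast
    with proper_filter_N_upward[OF U \<open>X \<in> U\<close>] show ?thesis by blast
  next
    case False
    define F where "F = {Y. Y \<subseteq> Npos \<and> (\<exists>X\<in>U. A \<inter> X \<subseteq> Y)}"
    have "proper_filter_N F"
    proof (rule proper_filter_NI)
      show "Npos \<in> F" using proper_filter_N_top[OF U] unfolding F_def by blast
    next
      show "{} \<notin> F" using False unfolding F_def by blast
    next
      fix X Y assume "X \<in> F" "Y \<in> F"
      then obtain P Q where "X \<subseteq> Npos" "P \<in> U" "Q \<in> U" "A \<inter> P \<subseteq> X" "A \<inter> Q \<subseteq> Y"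
        unfolding F_def by auto
      moreover from \<open>P \<in> U\<close> \<open>Q \<in> U\<close> have "P \<inter> Q \<in> U" by (rule proper_filter_N_Int[OF U])
      moreover have "A \<inter> (P \<inter> Q) \<subseteq> X \<inter> Y" using calculation by blast
      ultimately show "X \<inter> Y \<in> F" unfolding F_def by blast
    next
      fix X Y assume "X \<in> F" "X \<subseteq> Y" "Y \<subseteq> Npos"
      then show "Y \<in> F" unfolding F_def by blast
    qed (simp add: F_def)
    moreover have "U \<subseteq> F"
      using proper_filter_N_subset[OF U] unfolding F_def by blast
    ultimately have "F = U" by (rule maximal)
    moreover have "A \<in> F"
      using A proper_filter_N_top[OF U] unfolding F_def by blast
    ultimately show ?thesis by simp
  qed
  with U show ?thesis by (simp add: ultrafilter_N_iff_proper_filter_N)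
qed

lemma proper_filter_N_extends_to_ultrafilter:
  assumes "proper_filter_N F"
  shows "\<exists>U. ultrafilter_N U \<and> F \<subseteq> U"
proof -
  let ?S = "{G. proper_filter_N G \<and> F \<subseteq> G}"
  have "\<exists>U\<in>?S. \<forall>G\<in>?S. U \<subseteq> G \<longrightarrow> G = U"
  proof (rule subset_Zorn_nonempty)
    show "?S \<noteq> {}" using assms by blast
  next
    fix C assume "C \<noteq> {}" and chain: "subset.chain ?S C"
    then have "subset.chain {G. proper_filter_N G} C"
      unfolding subset.chain_def by blast
    with \<open>C \<noteq> {}\<close> have "proper_filter_N (\<Union>C)" by (rule proper_filter_N_Union_chain)
    moreover from \<open>C \<noteq> {}\<close> chain have "F \<subseteq> \<Union>C" unfolding subset.chain_def by blast
    ultimately show "\<Union>C \<in> ?S" by blast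
  qed
  then obtain U where U: "proper_filter_N U" "F \<subseteq> U"
    and maximal: "\<And>G. proper_filter_N G \<Longrightarrow> U \<subseteq> G \<Longrightarrow> G = U"
    by auto
  from U(1) maximal have "ultrafilter_N U" by (rule maximal_proper_filter_N_is_ultrafilter)
  with U(2) show ?thesis by blast
qed

lemma proper_filter_N_generated_by_decreasing_sequence:
  fixes B :: "nat \<Rightarrow> nat set"
  assumes "\<And>m. B m \<subseteq> Npos" and "\<And>m. B m \<noteq> {}" and "antimono B"
  shows "proper_filter_N {A. A \<subseteq> Npos \<and> (\<exists>m. B m \<subseteq> A)}"
proof (rule proper_filter_NI)
  fix X Y assume "X \<in> {A. A \<subseteq> Npos \<and> (\<exists>m. B m \<subseteq> A)}" "Y \<in> {A. A \<subseteq> Npos \<and> (\<exists>m. B m \<subseteq> A)}"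
  then obtain i j where "X \<subseteq> Npos" "B i \<subseteq> X" "B j \<subseteq> Y" by auto
  moreover have "B (max i j) \<subseteq> B i" "B (max i j) \<subseteq> B j"
    using antimonoD[OF \<open>antimono B\<close>] by auto
  ultimately have "X \<inter> Y \<subseteq> Npos" "B (max i j) \<subseteq> X \<inter> Y" by blast+
  then show "X \<inter> Y \<in> {A. A \<subseteq> Npos \<and> (\<exists>m. B m \<subseteq> A)}" by blast
qed (use assms(1,2) in \<open>blast intro: order_trans\<close>)+

lemma ultrafilter_N_containing_decreasing_sequence:
  fixes B :: "nat \<Rightarrow> nat set"
  assumes "\<And>m. B m \<subseteq> Npos" and "\<And>m. B m \<noteq> {}" and "antimono B"
  shows "\<exists>x. ultrafilter_N x \<and> (\<forall>m. B m \<in> x)"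
proof -
  have "proper_filter_N {A. A \<subseteq> Npos \<and> (\<exists>m. B m \<subseteq> A)}"
    using assms by (rule proper_filter_N_generated_by_decreasing_sequence)
  from proper_filter_N_extends_to_ultrafilter[OF this]
  obtain x where "ultrafilter_N x" "{A. A \<subseteq> Npos \<and> (\<exists>m. B m \<subseteq> A)} \<subseteq> x"
    by blast
  with assms(1) show ?thesis by blast
qed

lemma size_prime_factorization_of_L:
  assumes "k \<in> L i"
  shows "size (prime_factorization k) = i"
proof -
  from assms obtain ps where ps: "k = prod_list ps" "length ps = i" "\<forall>p\<in>set ps. prime p"
    unfolding L_def by blast
  then have "prime_factorization (prod_mset (mset ps)) = mset ps"
    by (intro prime_factorization_prod_mset_primes) auto
  with ps show ?thesis by (simp add: prod_mset_prod_list)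
qed

lemma multiple_not_in_L:
  fixes n m :: nat
  assumes "n \<noteq> 0"
  shows "n * 2 ^ (m + 1) \<in> Npos - (\<Union>i\<le>m. L i)"
proof -
  have "size (prime_factorization (n * 2 ^ (m + 1))) = size (prime_factorization n) + (m + 1)"
    using assms by (simp add: prime_factorization_mult prime_factorization_prime_power
        prime_factorization_prime)
  then have "n * 2 ^ (m + 1) \<notin> L i" if "i \<le> m" for i
    using that size_prime_factorization_of_L by fastforce
  with assms show ?thesis unfolding Npos_def by auto
qed

theorem corollary3p8:
  fixes n :: nat
  assumes "n \<in> Npos"
  shows "\<exists>x\<in>Ifam. udvd (principal n) x"
proof -
  define B where "B m = {k \<in> Npos - (\<Union>i\<le>m. L i). n dvd k}" for m
  have "B m \<subseteq> Npos" for m unfolding B_def by blast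
  moreover have "n * 2 ^ (m + 1) \<in> B m" for m
    using assms multiple_not_in_L[of n m] unfolding B_def Npos_def by simp
  then have "B m \<noteq> {}" for m by blast
  moreover have "antimono B" unfolding B_def by (intro antimonoI) auto
  ultimately have "\<exists>x. ultrafilter_N x \<and> (\<forall>m. B m \<in> x)"
    by (rule ultrafilter_N_containing_decreasing_sequence)
  then obtain x where x: "ultrafilter_N x" "\<And>m. B m \<in> x" by blast
  from x(1) have x_filter: "proper_filter_N x" by (simp add: ultrafilter_N_iff_proper_filter_N)
  have superset: "C \<in> x" if "B m \<subseteq> C" "C \<subseteq> Npos" for m C
    using proper_filter_N_upward[OF x_filter x(2) that] .
  have "Npos - L i \<in> x" for i
    by (rule superset[of i]) (auto simp: B_def)
  with x(1) have "x \<in> Ifam"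
    unfolding Ifam_def cl_def betaN_def by simp
  moreover have "{k \<in> Npos. \<exists>a\<in>A. a dvd k} \<in> x" if "A \<in> principal n" for A
    using that by (intro superset[of 0]) (auto simp: B_def principal_def)
  then have "udvd (principal n) x" unfolding udvd_def by blast
  ultimately show ?thesis by blast
qed

end
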